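(* Let $X$ be a Banach space and $T\in L(X)$ be such that (1) there exists $M\in L(X)$ with $[T,[T,M]]=0$ such that for every cyclic vector $u$ of $T$ and every $v\in X$ there exist $B,C\in\mathcal{C}(T)$ with $C[T,M]\neq 0$ and $Cv=Bu$. Then $T$ is not supercyclic. If additionally (2) there is $R\in\mathcal{C}(T)$ with dense range such that $R(X)\subseteq Y$ for some Banach space $Y\in\mathcal{Y}$ embedded into $X$, then $T$ is not weakly supercyclic.
   Context: Scalars are $\mathbb{K}\in\{\mathbb{R},\mathbb{C}\}$. $L(X)$ denotes bounded linear operators on $X$; $[T,S]=TS-ST$; $\mathcal{C}(T)=\{S\in L(X):[T,S]=0\}$. A vector $u$ is cyclic for $T$ if the linear span of $\{T^nu:n\in\mathbb{Z}_+\}$ is dense in $X$. $T$ is supercyclic (resp. weakly supercyclic) if for some $x\in X$ the set $\{zT^nx:z\in\mathbb{K},n\in\mathbb{Z}_+\}$ is norm dense (resp. weakly dense) in $X$. A Banach space $Y$ embedded into $X$ is a linear subspace of $X$ with its own norm making it a Banach space and whose topology is stronger than the one inherited from $X$. $\mathcal{Y}$ is the class of Banach spaces $X$ such that for every sequence $(x_n)_{n\in\mathbb{Z}_+}$ in $X$ with $n=O(\|x_n\|)$ as $n\to\infty$, the set $\{x_n:n\in\mathbb{Z}_+\}$ is weakly closed. *)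

theory Defs
  imports "HOL-Analysis.Analysis"
begin

text \<open>The scalar field K is modelled by a type 'k of class real_normed_field acting on
  the real Banach space 'a through sc; the action extends scaleR and is isometric,
  so 'a is a Banach space over K.\<close>

definition scalar_action :: "('k::real_normed_field \<Rightarrow> 'a::real_normed_vector \<Rightarrow> 'a) \<Rightarrow> bool" where
  "scalar_action sc \<longleftrightarrow>
     (\<forall>a b x. sc (a * b) x = sc a (sc b x)) \<and> (\<forall>x. sc 1 x = x) \<and>
     (\<forall>a b x. sc (a + b) x = sc a x + sc b x) \<and> (\<forall>a x y. sc a (x + y) = sc a x + sc a y) \<and>
     (\<forall>a x. norm (sc a x) = norm a * norm x) \<and> (\<forall>r x. sc (of_real r) x = scaleR r x)"

definition real_or_complex :: "'k::real_normed_field itself \<Rightarrow> bool" where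
  "real_or_complex _ \<longleftrightarrow> (\<forall>k::'k. k \<in> \<real>) \<or>
     (\<exists>i::'k. i * i = -1 \<and> (\<forall>k::'k. \<exists>a b. k = of_real a + of_real b * i))"

definition opL :: "('k::real_normed_field \<Rightarrow> 'a::real_normed_vector \<Rightarrow> 'a) \<Rightarrow> ('a \<Rightarrow> 'a) set" where
  "opL sc = {T. bounded_linear T \<and> (\<forall>a x. T (sc a x) = sc a (T x))}"

definition commutator :: "('a::ab_group_add \<Rightarrow> 'a) \<Rightarrow> ('a \<Rightarrow> 'a) \<Rightarrow> 'a \<Rightarrow> 'a" where
  "commutator T S = (\<lambda>x. T (S x) - S (T x))"

definition commutant :: "('k::real_normed_field \<Rightarrow> 'a::real_normed_vector \<Rightarrow> 'a) \<Rightarrow> ('a \<Rightarrow> 'a) \<Rightarrow> ('a \<Rightarrow> 'a) set" where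
  "commutant sc T = {S \<in> opL sc. commutator T S = (\<lambda>_. 0)}"

definition kspan :: "('k \<Rightarrow> 'a::comm_monoid_add \<Rightarrow> 'a) \<Rightarrow> 'a set \<Rightarrow> 'a set" where
  "kspan sc A = {x. \<exists>F c. finite F \<and> F \<subseteq> A \<and> x = (\<Sum>y\<in>F. sc (c y) y)}"

definition cyclic_vector :: "('k \<Rightarrow> 'a::real_normed_vector \<Rightarrow> 'a) \<Rightarrow> ('a \<Rightarrow> 'a) \<Rightarrow> 'a \<Rightarrow> bool" where
  "cyclic_vector sc T u \<longleftrightarrow> closure (kspan sc (range (\<lambda>n. (T ^^ n) u))) = UNIV"

definition supercyclic :: "('k \<Rightarrow> 'a::real_normed_vector \<Rightarrow> 'a) \<Rightarrow> ('a \<Rightarrow> 'a) \<Rightarrow> bool" where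
  "supercyclic sc T \<longleftrightarrow> (\<exists>x. closure {sc z ((T ^^ n) x) | z n. True} = UNIV)"

text \<open>Weak topology, generated by the continuous linear functionals (real ones; for a
  complex space these generate the same topology as the complex dual).\<close>
definition weakly_dense :: "'a::real_normed_vector set \<Rightarrow> bool" where
  "weakly_dense A \<longleftrightarrow> (\<forall>x. \<forall>F :: ('a \<Rightarrow> real) set. finite F \<longrightarrow> (\<forall>f\<in>F. bounded_linear f) \<longrightarrow>
      (\<forall>e>0. \<exists>y\<in>A. \<forall>f\<in>F. \<bar>f y - f x\<bar> < e))"

definition weakly_supercyclic :: "('k \<Rightarrow> 'a::real_normed_vector \<Rightarrow> 'a) \<Rightarrow> ('a \<Rightarrow> 'a) \<Rightarrow> bool" where
  "weakly_supercyclic sc T \<longleftrightarrow> (\<exists>x. weakly_dense {sc z ((T ^^ n) x) | z n. True})"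

text \<open>A Banach space Y embedded into X: a K-linear subspace Y of X with its own norm nY,
  complete, whose topology is stronger than the one inherited from X.\<close>
definition embedded_banach :: "('k::real_normed_field \<Rightarrow> 'a::real_normed_vector \<Rightarrow> 'a) \<Rightarrow> 'a set \<Rightarrow> ('a \<Rightarrow> real) \<Rightarrow> bool" where
  "embedded_banach sc Y nY \<longleftrightarrow>
     0 \<in> Y \<and> (\<forall>x\<in>Y. \<forall>y\<in>Y. x + y \<in> Y) \<and> (\<forall>a. \<forall>y\<in>Y. sc a y \<in> Y) \<and>
     (\<forall>y\<in>Y. 0 \<le> nY y \<and> (nY y = 0 \<longleftrightarrow> y = 0)) \<and>
     (\<forall>x\<in>Y. \<forall>y\<in>Y. nY (x + y) \<le> nY x + nY y) \<and>
     (\<forall>a. \<forall>y\<in>Y. nY (sc a y) = norm a * nY y) \<and>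
     (\<forall>s. (\<forall>n. s n \<in> Y) \<longrightarrow> (\<forall>e>0. \<exists>N. \<forall>m\<ge>N. \<forall>n\<ge>N. nY (s m - s n) < e) \<longrightarrow>
          (\<exists>l\<in>Y. (\<lambda>n. nY (s n - l)) \<longlonglongrightarrow> 0)) \<and>
     (\<exists>c. \<forall>y\<in>Y. norm y \<le> c * nY y)"

definition Y_functional :: "'a::real_vector set \<Rightarrow> ('a \<Rightarrow> real) \<Rightarrow> ('a \<Rightarrow> real) \<Rightarrow> bool" where
  "Y_functional Y nY f \<longleftrightarrow> (\<forall>x\<in>Y. \<forall>y\<in>Y. f (x + y) = f x + f y) \<and>
     (\<forall>r. \<forall>y\<in>Y. f (scaleR r y) = r * f y) \<and> (\<exists>c. \<forall>y\<in>Y. \<bar>f y\<bar> \<le> c * nY y)"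

definition Y_weakly_closed :: "'a::real_vector set \<Rightarrow> ('a \<Rightarrow> real) \<Rightarrow> 'a set \<Rightarrow> bool" where
  "Y_weakly_closed Y nY S \<longleftrightarrow> (\<forall>x\<in>Y - S. \<exists>F. finite F \<and> (\<forall>f\<in>F. Y_functional Y nY f) \<and>
      (\<exists>e>0. \<forall>y\<in>S. \<exists>f\<in>F. e \<le> \<bar>f y - f x\<bar>))"

definition in_class_Y :: "'a::real_vector set \<Rightarrow> ('a \<Rightarrow> real) \<Rightarrow> bool" where
  "in_class_Y Y nY \<longleftrightarrow> (\<forall>x :: nat \<Rightarrow> 'a. (\<forall>n. x n \<in> Y) \<longrightarrow>
      (\<exists>C N. \<forall>n\<ge>N. real n \<le> C * nY (x n)) \<longrightarrow> Y_weakly_closed Y nY (range x))"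

end

theory Submission
  imports Defs
begin

text \<open>
  Condition (1) alone already excludes weak supercyclicity, and hence also supercyclicity
  (a norm-dense set is weakly dense).

  Suppose the projective orbit S = {z T^n u} is weakly dense. Then u is cyclic, so (1) with
  v = M u yields B, C in the commutant of T with C M u = B u and L = C [T,M] \<noteq> 0. For
  A = T (C M - B), an induction using [T,[T,M]] = 0 gives the orbit identity
  A (T^n u) = - n L (T^n u), which persists on the whole line K T^n u. Fix a real functional
  \<phi> with \<phi> (L y0) = 1. On the weak neighbourhood of y0 where \<phi> L > 1/2 and
  \<phi> A + r \<phi> L is small, only one degree n can occur, so the weakly dense set S meets this
  neighbourhood inside a single line K T^N u. That line is then norm dense, X is one-dimensional
  over K, T commutes with M, and L = 0: a contradiction.
\<close>

section \<open>The real Hahn--Banach theorem\<close>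

definition dominated_graph :: "('a::real_normed_vector \<times> real) set \<Rightarrow> real \<Rightarrow> bool" where
  "dominated_graph G c \<longleftrightarrow>
     G \<noteq> {} \<and>
     (\<forall>x a b. (x, a) \<in> G \<longrightarrow> (x, b) \<in> G \<longrightarrow> a = b) \<and>
     (\<forall>x a y b. (x, a) \<in> G \<longrightarrow> (y, b) \<in> G \<longrightarrow> (x + y, a + b) \<in> G) \<and>
     (\<forall>x a r. (x, a) \<in> G \<longrightarrow> (r *\<^sub>R x, r * a) \<in> G) \<and>
     (\<forall>x a. (x, a) \<in> G \<longrightarrow> a \<le> c * norm x)"

lemma dominated_graphD:
  assumes "dominated_graph G c"
  shows "\<And>x a b. (x, a) \<in> G \<Longrightarrow> (x, b) \<in> G \<Longrightarrow> a = b"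
    and "\<And>x a y b. (x, a) \<in> G \<Longrightarrow> (y, b) \<in> G \<Longrightarrow> (x + y, a + b) \<in> G"
    and "\<And>x a r. (x, a) \<in> G \<Longrightarrow> (r *\<^sub>R x, r * a) \<in> G"
    and "\<And>x a. (x, a) \<in> G \<Longrightarrow> a \<le> c * norm x"
  using assms unfolding dominated_graph_def by blast+

lemma dominated_graph_zero: "dominated_graph G c \<Longrightarrow> (0, 0) \<in> G"
  unfolding dominated_graph_def by (metis ex_in_conv mult_zero_left prod.exhaust scaleR_zero_left)

definition graph_extension :: "('a::real_vector \<times> real) set \<Rightarrow> 'a \<Rightarrow> real \<Rightarrow> ('a \<times> real) set" where
  "graph_extension G x0 \<xi> = {(h + t *\<^sub>R x0, a + t * \<xi>) | h a t. (h, a) \<in> G}"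

lemma graph_extensionI: "(h, a) \<in> G \<Longrightarrow> (h + t *\<^sub>R x0, a + t * \<xi>) \<in> graph_extension G x0 \<xi>"
  unfolding graph_extension_def by blast

lemma graph_extensionE:
  assumes "(x, b) \<in> graph_extension G x0 \<xi>"
  obtains h a t where "x = h + t *\<^sub>R x0" "b = a + t * \<xi>" "(h, a) \<in> G"
  using assms unfolding graph_extension_def by blast

text \<open>An admissible value at x0 exists: every lower bound a - c |h - x0| lies below every upper
  bound c |k + x0| - b, by domination of (h + k, a + b) and the triangle inequality.\<close>

lemma extension_value_exists:
  assumes G: "dominated_graph G c" and c: "c \<ge> 0"
  shows "\<exists>\<xi>. (\<forall>k b. (k, b) \<in> G \<longrightarrow> \<xi> \<le> c * norm (k + x0) - b) \<and>
             (\<forall>h a. (h, a) \<in> G \<longrightarrow> a - c * norm (h - x0) \<le> \<xi>)"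
proof -
  define Q where "Q = {a - c * norm (h - x0) | h a. (h, a) \<in> G}"
  have lower_le_upper: "q \<le> c * norm (k + x0) - b" if qQ: "q \<in> Q" and kb: "(k, b) \<in> G" for q k b
  proof -
    obtain h a where q: "q = a - c * norm (h - x0)" "(h, a) \<in> G" using qQ unfolding Q_def by blast
    have "a + b \<le> c * norm (h + k)" using dominated_graphD(4)[OF G dominated_graphD(2)[OF G q(2) kb]] .
    also have "\<dots> \<le> c * (norm (h - x0) + norm (k + x0))"
      using norm_triangle_ineq[of "h - x0" "k + x0"] c by (intro mult_left_mono) simp_all
    finally show ?thesis using q(1) by (simp add: algebra_simps)
  qed
  have zero: "(0, 0) \<in> G" by (rule dominated_graph_zero[OF G])
  then have "Q \<noteq> {}" unfolding Q_def by blast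
  then have "Sup Q \<le> c * norm (k + x0) - b" if "(k, b) \<in> G" for k b
    using lower_le_upper[OF _ that] by (intro cSup_least) auto
  moreover have "a - c * norm (h - x0) \<le> Sup Q" if "(h, a) \<in> G" for h a
    using lower_le_upper[OF _ zero] that unfolding Q_def
    by (intro cSup_upper bdd_aboveI[of _ "c * norm x0"]) auto
  ultimately show ?thesis by blast
qed

text \<open>With an admissible value the extension stays dominated: for t > 0 resp. t < 0 the bound
  at h + t x0 is the upper resp. lower admissibility bound at h / t.\<close>

lemma graph_extension_bound:
  assumes G: "dominated_graph G c"
    and upper: "\<And>k b. (k, b) \<in> G \<Longrightarrow> \<xi> \<le> c * norm (k + x0) - b"
    and lower: "\<And>h a. (h, a) \<in> G \<Longrightarrow> a - c * norm (h - x0) \<le> \<xi>"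
    and xa: "(x, a) \<in> graph_extension G x0 \<xi>"
  shows "a \<le> c * norm x"
proof -
  obtain h a1 t where e: "x = h + t *\<^sub>R x0" "a = a1 + t * \<xi>" "(h, a1) \<in> G"
    using xa by (rule graph_extensionE)
  note smul = dominated_graphD(3)[OF G e(3)]
  consider "t = 0" | "t > 0" | "t < 0" by linarith
  then show "a \<le> c * norm x"
  proof cases
    case 1
    then show ?thesis using e dominated_graphD(4)[OF G] by simp
  next
    case 2
    have "x = t *\<^sub>R ((1 / t) *\<^sub>R h + x0)" using 2 e(1) by (simp add: algebra_simps)
    then have nx: "norm x = t * norm ((1 / t) *\<^sub>R h + x0)" using 2 by simp
    have "t * \<xi> \<le> t * (c * norm ((1 / t) *\<^sub>R h + x0) - (1 / t) * a1)"
      using upper[OF smul[of "1 / t"]] 2 by (simp add: mult_left_mono)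
    then show ?thesis using 2 e(2) nx by (simp add: algebra_simps)
  next
    case 3
    have "x = (-t) *\<^sub>R ((1 / (-t)) *\<^sub>R h - x0)" using 3 e(1) by (simp add: algebra_simps)
    then have nx: "norm x = (-t) * norm ((1 / (-t)) *\<^sub>R h - x0)" using 3 by simp
    have "(-t) * ((1 / (-t)) * a1 - c * norm ((1 / (-t)) *\<^sub>R h - x0)) \<le> (-t) * \<xi>"
      using lower[OF smul[of "1 / (-t)"]] 3 by (simp add: mult_left_mono)
    then show ?thesis using 3 e(2) nx by (simp add: algebra_simps)
  qed
qed

lemma dominated_graph_extend:
  assumes G: "dominated_graph G c" and c: "c \<ge> 0" and x0: "\<forall>a. (x0, a) \<notin> G"
  shows "\<exists>G'. dominated_graph G' c \<and> G \<subset> G'"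
proof -
  note sv = dominated_graphD(1)[OF G] and add = dominated_graphD(2)[OF G]
    and smul = dominated_graphD(3)[OF G]
  obtain \<xi> where upper: "\<And>k b. (k, b) \<in> G \<Longrightarrow> \<xi> \<le> c * norm (k + x0) - b"
    and lower: "\<And>h a. (h, a) \<in> G \<Longrightarrow> a - c * norm (h - x0) \<le> \<xi>"
    using extension_value_exists[OF G c, of x0] by blast
  define G' where "G' = graph_extension G x0 \<xi>"
  have "G \<subseteq> G'" using graph_extensionI[where t = 0] unfolding G'_def by auto
  moreover have x0_in: "(x0, \<xi>) \<in> G'"
    using graph_extensionI[OF dominated_graph_zero[OF G], of 1] unfolding G'_def by simp
  moreover have "dominated_graph G' c"
    unfolding dominated_graph_def
  proof (intro conjI allI impI)
    show "G' \<noteq> {}" using x0_in by blast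
  next
    fix x a b assume xa: "(x, a) \<in> G'" and xb: "(x, b) \<in> G'"
    obtain h1 a1 t1 where e1: "x = h1 + t1 *\<^sub>R x0" "a = a1 + t1 * \<xi>" "(h1, a1) \<in> G"
      using xa unfolding G'_def by (rule graph_extensionE)
    obtain h2 a2 t2 where e2: "x = h2 + t2 *\<^sub>R x0" "b = a2 + t2 * \<xi>" "(h2, a2) \<in> G"
      using xb unfolding G'_def by (rule graph_extensionE)
    note e = e1 e2
    (* distinct coefficients t1 \<noteq> t2 would put x0 into the domain of G *)
    have "t1 = t2"
    proof (rule ccontr)
      assume ne: "t1 \<noteq> t2"
      have "(h1 + (-1) *\<^sub>R h2, a1 + (-1) * a2) \<in> G" using add[OF e(3) smul[OF e(6)]] .
      from smul[OF this, of "1 / (t2 - t1)"]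
      have "((1 / (t2 - t1)) *\<^sub>R (h1 - h2), (a1 - a2) / (t2 - t1)) \<in> G" by simp
      moreover have "h1 - h2 = (t2 - t1) *\<^sub>R x0" using e(1,4) by (simp add: algebra_simps)
      ultimately show False using x0 ne by auto
    qed
    then show "a = b" using e sv by auto
  next
    fix x a y b assume xa: "(x, a) \<in> G'" and yb: "(y, b) \<in> G'"
    obtain h1 a1 t1 where e1: "x = h1 + t1 *\<^sub>R x0" "a = a1 + t1 * \<xi>" "(h1, a1) \<in> G"
      using xa unfolding G'_def by (rule graph_extensionE)
    obtain h2 a2 t2 where e2: "y = h2 + t2 *\<^sub>R x0" "b = a2 + t2 * \<xi>" "(h2, a2) \<in> G"
      using yb unfolding G'_def by (rule graph_extensionE)
    note e = e1 e2
    show "(x + y, a + b) \<in> G'"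
      using graph_extensionI[OF add[OF e(3) e(6)], of "t1 + t2"] e unfolding G'_def
      by (simp add: algebra_simps)
  next
    fix x a r assume "(x, a) \<in> G'"
    then obtain h a1 t where e: "x = h + t *\<^sub>R x0" "a = a1 + t * \<xi>" "(h, a1) \<in> G"
      unfolding G'_def by (rule graph_extensionE)
    show "(r *\<^sub>R x, r * a) \<in> G'"
      using graph_extensionI[OF smul[OF e(3), of r], of "r * t"] e unfolding G'_def
      by (simp add: algebra_simps)
  next
    fix x a assume "(x, a) \<in> G'"
    then show "a \<le> c * norm x" using graph_extension_bound[OF G upper lower] unfolding G'_def by blast
  qed
  moreover have "G' \<noteq> G" using x0_in x0 by blast
  ultimately show ?thesis by blast
qed

lemma dominated_graph_chain_Union:
  assumes ne: "\<C> \<noteq> {}" and dom: "\<And>G. G \<in> \<C> \<Longrightarrow> dominated_graph G c"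
    and comparable: "\<And>G H. G \<in> \<C> \<Longrightarrow> H \<in> \<C> \<Longrightarrow> G \<subseteq> H \<or> H \<subseteq> G"
  shows "dominated_graph (\<Union>\<C>) c"
proof -
  have common: "\<exists>G\<in>\<C>. p \<in> G \<and> q \<in> G" if "p \<in> \<Union>\<C>" "q \<in> \<Union>\<C>" for p q
    using that comparable by blast
  show ?thesis
    unfolding dominated_graph_def
  proof (intro conjI allI impI)
    show "\<Union>\<C> \<noteq> {}" using ne dom unfolding dominated_graph_def by blast
  next
    fix x a b assume "(x, a) \<in> \<Union>\<C>" "(x, b) \<in> \<Union>\<C>"
    then obtain G where "G \<in> \<C>" "(x, a) \<in> G" "(x, b) \<in> G" using common by blast
    then show "a = b" using dominated_graphD(1)[OF dom] by blast
  next
    fix x a y b assume "(x, a) \<in> \<Union>\<C>" "(y, b) \<in> \<Union>\<C>"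
    then obtain G where "G \<in> \<C>" "(x, a) \<in> G" "(y, b) \<in> G" using common by blast
    then show "(x + y, a + b) \<in> \<Union>\<C>" using dominated_graphD(2)[OF dom] by blast
  next
    fix x a r assume "(x, a) \<in> \<Union>\<C>"
    then obtain G where "G \<in> \<C>" "(x, a) \<in> G" by blast
    then show "(r *\<^sub>R x, r * a) \<in> \<Union>\<C>" using dominated_graphD(3)[OF dom] by blast
  next
    fix x a assume "(x, a) \<in> \<Union>\<C>"
    then obtain G where "G \<in> \<C>" "(x, a) \<in> G" by blast
    then show "a \<le> c * norm x" using dominated_graphD(4)[OF dom] by blast
  qed
qed

lemma total_dominated_graph_functional:
  assumes G: "dominated_graph G c" and total: "\<And>x. \<exists>a. (x, a) \<in> G"
  shows "\<exists>f. bounded_linear f \<and> (\<forall>x a. (x, a) \<in> G \<longrightarrow> f x = a)"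
proof -
  define f where "f x = (THE a. (x, a) \<in> G)" for x
  have unique: "\<exists>!a. (x, a) \<in> G" for x
    using total[of x] dominated_graphD(1)[OF G] by blast
  have in_G: "(x, f x) \<in> G" for x
    unfolding f_def by (rule theI'[OF unique])
  have f_eq: "f x = a" if "(x, a) \<in> G" for x a
    using that in_G[of x] dominated_graphD(1)[OF G] by blast
  have "bounded_linear f"
  proof (rule bounded_linear_intro[where K = c])
    fix x y show "f (x + y) = f x + f y"
      by (rule f_eq, rule dominated_graphD(2)[OF G in_G in_G])
  next
    fix r x show "f (r *\<^sub>R x) = r *\<^sub>R f x"
      using f_eq[OF dominated_graphD(3)[OF G in_G]] by simp
  next
    fix x
    have "f x \<le> c * norm x" by (rule dominated_graphD(4)[OF G in_G])
    moreover have "- f x \<le> c * norm x"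
      using dominated_graphD(4)[OF G dominated_graphD(3)[OF G in_G[of x], of "-1"]] by simp
    ultimately show "norm (f x) \<le> norm x * c" by (simp add: abs_le_iff mult.commute)
  qed
  then show ?thesis using f_eq by blast
qed

text \<open>Hahn--Banach: by Zorn's lemma a maximal dominated extension exists, and by the one-step
  extension it is total, i.e. the graph of a bounded linear functional.\<close>

lemma hahn_banach_graph:
  fixes G0 :: "('a::real_normed_vector \<times> real) set"
  assumes G0: "dominated_graph G0 c" and c: "c \<ge> 0"
  shows "\<exists>f. bounded_linear f \<and> (\<forall>x a. (x, a) \<in> G0 \<longrightarrow> f x = a)"
proof -
  define \<A> where "\<A> = {G. dominated_graph G c \<and> G0 \<subseteq> G}"
  have "\<exists>G\<in>\<A>. \<forall>G'\<in>\<A>. G \<subseteq> G' \<longrightarrow> G' = G"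
  proof (rule subset_Zorn_nonempty)
    show "\<A> \<noteq> {}" using G0 \<A>_def by blast
  next
    fix \<C> assume ne: "\<C> \<noteq> {}" and chain: "subset.chain \<A> \<C>"
    have "\<C> \<subseteq> \<A>" and comparable: "\<And>G H. G \<in> \<C> \<Longrightarrow> H \<in> \<C> \<Longrightarrow> G \<subseteq> H \<or> H \<subseteq> G"
      using chain unfolding subset_chain_def by blast+
    then have dom: "\<And>G. G \<in> \<C> \<Longrightarrow> dominated_graph G c" and above: "\<And>G. G \<in> \<C> \<Longrightarrow> G0 \<subseteq> G"
      unfolding \<A>_def by blast+
    have "dominated_graph (\<Union>\<C>) c" by (rule dominated_graph_chain_Union[OF ne dom comparable])
    moreover have "G0 \<subseteq> \<Union>\<C>" using ne above by blast
    ultimately show "\<Union>\<C> \<in> \<A>" unfolding \<A>_def by blast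
  qed
  then obtain G where "G \<in> \<A>" and maximal: "\<forall>G'\<in>\<A>. G \<subseteq> G' \<longrightarrow> G' = G" by blast
  then have G: "dominated_graph G c" "G0 \<subseteq> G" unfolding \<A>_def by auto
  have total: "\<exists>a. (x, a) \<in> G" for x
  proof (rule ccontr)
    assume "\<not> (\<exists>a. (x, a) \<in> G)"
    then obtain G' where G': "dominated_graph G' c" "G \<subset> G'"
      using dominated_graph_extend[OF G(1) c, of x] by blast
    then have "G' \<in> \<A>" using G(2) unfolding \<A>_def by blast
    then show False using maximal G'(2) by blast
  qed
  then show ?thesis using total_dominated_graph_functional[OF G(1)] G(2) by blast
qed

lemma subspace_closure:
  fixes V :: "'a::real_normed_vector set"
  assumes V: "subspace V"
  shows "subspace (closure V)"
  unfolding subspace_def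
proof (intro conjI ballI allI)
  show "0 \<in> closure V" using subspace_0[OF V] closure_subset by blast
next
  fix x y assume "x \<in> closure V" "y \<in> closure V"
  then obtain s t where s: "\<forall>n. s n \<in> V" "s \<longlonglongrightarrow> x" and t: "\<forall>n. t n \<in> V" "t \<longlonglongrightarrow> y"
    unfolding closure_sequential by blast
  define u where "u n = s n + t n" for n
  have "\<forall>n. u n \<in> V" using s(1) t(1) subspace_add[OF V] unfolding u_def by blast
  moreover have "u \<longlonglongrightarrow> x + y" using s(2) t(2) unfolding u_def by (rule tendsto_add)
  ultimately show "x + y \<in> closure V" unfolding closure_sequential by blast
next
  fix r x assume "x \<in> closure V"
  then obtain s where s: "\<forall>n. s n \<in> V" "s \<longlonglongrightarrow> x"
    unfolding closure_sequential by blast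
  define u where "u n = r *\<^sub>R s n" for n
  have "\<forall>n. u n \<in> V" using s(1) subspace_scale[OF V] unfolding u_def by blast
  moreover have "u \<longlonglongrightarrow> r *\<^sub>R x" using s(2) unfolding u_def by (intro tendsto_scaleR tendsto_const)
  ultimately show "r *\<^sub>R x \<in> closure V" unfolding closure_sequential by blast
qed

lemma coordinate_graph_dominated:
  fixes V :: "'a::real_normed_vector set"
  assumes V: "subspace V" and y: "y \<notin> V" and d: "d > 0" "\<And>v. v \<in> V \<Longrightarrow> d \<le> dist y v"
  defines "G0 \<equiv> {(v + t *\<^sub>R y, t) | v t. v \<in> V}"
  shows "dominated_graph G0 (1 / d)"
proof -
  have G0E: "\<exists>v. x = v + a *\<^sub>R y \<and> v \<in> V" if "(x, a) \<in> G0" for x a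
    using that unfolding G0_def by blast
  have G0I: "(v + t *\<^sub>R y, t) \<in> G0" if "v \<in> V" for v t
    using that unfolding G0_def by blast
  show ?thesis
    unfolding dominated_graph_def
  proof (intro conjI allI impI)
    show "G0 \<noteq> {}" using G0I[OF subspace_0[OF V(1)]] by blast
  next
    fix x a b assume "(x, a) \<in> G0" "(x, b) \<in> G0"
    then obtain v w where e: "x = v + a *\<^sub>R y" "v \<in> V" "x = w + b *\<^sub>R y" "w \<in> V"
      using G0E by metis
    show "a = b"
    proof (rule ccontr)
      assume "a \<noteq> b"
      moreover have "(a - b) *\<^sub>R y = w - v" using e(1,3) by (simp add: algebra_simps)
      ultimately have "y = (1 / (a - b)) *\<^sub>R (w - v)" by (metis divide_inverse_commute
          divide_self_if mult_1 right_minus_eq scaleR_one scaleR_scaleR)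
      moreover have "(1 / (a - b)) *\<^sub>R (w - v) \<in> V"
        using subspace_scale[OF V(1) subspace_diff[OF V(1) e(4) e(2)]] .
      ultimately show False using y by simp
    qed
  next
    fix x a x' b assume "(x, a) \<in> G0" "(x', b) \<in> G0"
    then obtain v w where e: "x = v + a *\<^sub>R y" "v \<in> V" "x' = w + b *\<^sub>R y" "w \<in> V"
      using G0E by metis
    have "(v + w + (a + b) *\<^sub>R y, a + b) \<in> G0" using G0I[OF subspace_add[OF V(1) e(2) e(4)]] .
    then show "(x + x', a + b) \<in> G0" using e by (simp add: algebra_simps)
  next
    fix x a r assume "(x, a) \<in> G0"
    then obtain v where e: "x = v + a *\<^sub>R y" "v \<in> V" using G0E by metis
    have "(r *\<^sub>R v + (r * a) *\<^sub>R y, r * a) \<in> G0" using G0I[OF subspace_scale[OF V(1) e(2)]] .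
    then show "(r *\<^sub>R x, r * a) \<in> G0" using e by (simp add: algebra_simps)
  next
    fix x a assume "(x, a) \<in> G0"
    then obtain v where e: "x = v + a *\<^sub>R y" "v \<in> V" using G0E by metis
    show "a \<le> 1 / d * norm x"
    proof (cases "a > 0")
      case True
      have "- ((1 / a) *\<^sub>R v) \<in> V" using subspace_neg[OF V(1) subspace_scale[OF V(1) e(2)]] .
      then have "d \<le> dist y (- ((1 / a) *\<^sub>R v))" by (rule d(2))
      also have "dist y (- ((1 / a) *\<^sub>R v)) = norm ((1 / a) *\<^sub>R x)"
        using True e(1) by (simp add: dist_norm algebra_simps)
      finally have "d \<le> norm x / a" using True by simp
      then show ?thesis using True d by (simp add: field_simps)
    next
      case False
      moreover have "0 \<le> 1 / d * norm x" using d by simp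
      ultimately show ?thesis by linarith
    qed
  qed
qed

lemma separating_functional:
  fixes V :: "'a::real_normed_vector set"
  assumes V: "subspace V" "closed V" and y: "y \<notin> V"
  shows "\<exists>f::'a \<Rightarrow> real. bounded_linear f \<and> (\<forall>v\<in>V. f v = 0) \<and> f y = 1"
proof -
  define d where "d = infdist y V"
  have "V \<noteq> {}" using subspace_0[OF V(1)] by blast
  then have d: "d > 0" unfolding d_def by (rule infdist_pos_not_in_closed[OF V(2) _ y])
  define G0 where "G0 = {(v + t *\<^sub>R y, t) | v t. v \<in> V}"
  have "dominated_graph G0 (1 / d)"
    unfolding G0_def using V(1) y d by (rule coordinate_graph_dominated) (simp add: d_def infdist_le)
  moreover have "0 \<le> 1 / d" using d by simp
  ultimately obtain f where f: "bounded_linear f" "\<forall>x a. (x, a) \<in> G0 \<longrightarrow> f x = a"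
    using hahn_banach_graph by blast
  have "(v + 0 *\<^sub>R y, 0) \<in> G0" if "v \<in> V" for v using that unfolding G0_def by blast
  then have "f v = 0" if "v \<in> V" for v using f(2) that by fastforce
  moreover have "(0 + 1 *\<^sub>R y, 1) \<in> G0" using subspace_0[OF V(1)] unfolding G0_def by blast
  then have "f y = 1" using f(2) by simp
  ultimately show ?thesis using f(1) by blast
qed

lemma in_closure_subspace:
  fixes V :: "'a::real_normed_vector set"
  assumes V: "subspace V"
    and no_separation: "\<And>f::'a \<Rightarrow> real. bounded_linear f \<Longrightarrow> (\<forall>v\<in>V. f v = 0) \<Longrightarrow> f y = 0"
  shows "y \<in> closure V"
proof (rule ccontr)
  assume "y \<notin> closure V"
  then obtain f :: "'a \<Rightarrow> real" where f: "bounded_linear f" "\<forall>v\<in>closure V. f v = 0" "f y = 1"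
    using separating_functional[OF subspace_closure[OF V] closed_closure] by blast
  have "\<forall>v\<in>V. f v = 0" using f(2) closure_subset by blast
  then show False using no_separation[OF f(1)] f(3) by simp
qed

lemma functional_nonzero:
  fixes x :: "'a::real_normed_vector"
  assumes "x \<noteq> 0"
  shows "\<exists>f::'a \<Rightarrow> real. bounded_linear f \<and> f x = 1"
  using separating_functional[OF subspace_single_0 closed_singleton, of x] assms by blast

section \<open>Weak density\<close>

definition weak_basic_open :: "'i set \<Rightarrow> ('i \<Rightarrow> 'a \<Rightarrow> real) \<Rightarrow> ('i \<Rightarrow> real set) \<Rightarrow> 'a set" where
  "weak_basic_open I \<phi> U = {y. \<forall>i\<in>I. \<phi> i y \<in> U i}"

definition weak_open_data :: "'i set \<Rightarrow> ('i \<Rightarrow> 'a::real_normed_vector \<Rightarrow> real) \<Rightarrow> ('i \<Rightarrow> real set) \<Rightarrow> bool" where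
  "weak_open_data I \<phi> U \<longleftrightarrow> finite I \<and> (\<forall>i\<in>I. bounded_linear (\<phi> i) \<and> open (U i))"

lemma weak_basic_open_radius:
  assumes data: "weak_open_data I \<phi> U" and y: "y \<in> weak_basic_open I \<phi> U"
  shows "\<exists>\<delta>>0. \<forall>z. (\<forall>i\<in>I. \<bar>\<phi> i z - \<phi> i y\<bar> < \<delta>) \<longrightarrow> z \<in> weak_basic_open I \<phi> U"
proof -
  have "\<forall>i\<in>I. \<exists>\<delta>>0. ball (\<phi> i y) \<delta> \<subseteq> U i"
    using data y open_contains_ball unfolding weak_open_data_def weak_basic_open_def by blast
  then obtain \<delta> where \<delta>: "\<And>i. i \<in> I \<Longrightarrow> \<delta> i > 0 \<and> ball (\<phi> i y) (\<delta> i) \<subseteq> U i"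
    by metis
  define \<epsilon> where "\<epsilon> = Min (insert 1 (\<delta> ` I))"
  have fin: "finite I" using data unfolding weak_open_data_def by blast
  have "\<epsilon> > 0" unfolding \<epsilon>_def using fin \<delta> by (subst Min_gr_iff) auto
  moreover have le: "\<epsilon> \<le> \<delta> i" if "i \<in> I" for i unfolding \<epsilon>_def using fin that by (intro Min_le) auto
  moreover have "z \<in> weak_basic_open I \<phi> U" if z: "\<forall>i\<in>I. \<bar>\<phi> i z - \<phi> i y\<bar> < \<epsilon>" for z
    unfolding weak_basic_open_def
  proof (intro CollectI ballI)
    fix i assume i: "i \<in> I"
    have "\<bar>\<phi> i z - \<phi> i y\<bar> < \<delta> i" using z i le[OF i] by fastforce
    then have "dist (\<phi> i y) (\<phi> i z) < \<delta> i" by (simp add: dist_real_def abs_minus_commute)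
    then show "\<phi> i z \<in> U i" using \<delta>[OF i] by auto
  qed
  ultimately show ?thesis by blast
qed

lemma dense_imp_weakly_dense:
  fixes A :: "'a::real_normed_vector set"
  assumes "closure A = UNIV"
  shows "weakly_dense A"
  unfolding weakly_dense_def
proof (intro allI impI)
  fix x :: 'a and F :: "('a \<Rightarrow> real) set" and e :: real
  assume F: "finite F" "\<forall>f\<in>F. bounded_linear f" and e: "e > 0"
  obtain K where K: "\<And>f. f \<in> F \<Longrightarrow> K f > 0 \<and> (\<forall>z. norm (f z) \<le> norm z * K f)"
    using F(2) bounded_linear.pos_bounded by metis
  define K' where "K' = (\<Sum>f\<in>F. K f) + 1"
  have K_sum: "K f \<le> (\<Sum>f\<in>F. K f)" if "f \<in> F" for f
    by (rule member_le_sum[OF that _ F(1)]) (use K in \<open>auto intro: less_imp_le\<close>)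
  have "0 \<le> (\<Sum>f\<in>F. K f)" using K by (auto intro: sum_nonneg less_imp_le)
  then have K': "K' > 0" "\<And>f. f \<in> F \<Longrightarrow> K f \<le> K'"
    unfolding K'_def using K_sum by (auto simp: add_nonneg_pos add_increasing2)
  have "x \<in> closure A" using assms by simp
  moreover have "e / K' > 0" using e K'(1) by simp
  ultimately obtain y where y: "y \<in> A" "dist y x < e / K'"
    unfolding closure_approachable by blast
  have "\<bar>f y - f x\<bar> < e" if f: "f \<in> F" for f
  proof -
    have "\<bar>f y - f x\<bar> = norm (f (y - x))" using F(2) f by (simp add: linear_diff bounded_linear.linear)
    also have "\<dots> \<le> norm (y - x) * K'" using K[OF f] K'(2)[OF f] by (meson mult_left_mono norm_ge_zero order.trans)
    also have "\<dots> < e" using y(2) K'(1) by (simp add: dist_norm field_simps)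
    finally show ?thesis .
  qed
  then show "\<exists>y\<in>A. \<forall>f\<in>F. \<bar>f y - f x\<bar> < e" using y(1) by blast
qed

lemma weakly_dense_meets_basic_open:
  fixes S :: "'a::real_normed_vector set" and f :: "'a \<Rightarrow> real"
  assumes wd: "weakly_dense S" and data: "weak_open_data I \<phi> U"
    and y: "y \<in> weak_basic_open I \<phi> U" and f: "bounded_linear f" and e: "e > 0"
  shows "\<exists>p \<in> S \<inter> weak_basic_open I \<phi> U. \<bar>f p - f y\<bar> < e"
proof -
  obtain \<delta> where \<delta>: "\<delta> > 0"
    and box: "\<And>z. \<forall>i\<in>I. \<bar>\<phi> i z - \<phi> i y\<bar> < \<delta> \<Longrightarrow> z \<in> weak_basic_open I \<phi> U"
    using weak_basic_open_radius[OF data y] by blast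
  have "finite (insert f (\<phi> ` I))" "\<forall>g \<in> insert f (\<phi> ` I). bounded_linear g"
    using data f unfolding weak_open_data_def by auto
  moreover have "min e \<delta> > 0" using e \<delta> by simp
  ultimately obtain p where p: "p \<in> S" "\<forall>g \<in> insert f (\<phi> ` I). \<bar>g p - g y\<bar> < min e \<delta>"
    using wd unfolding weakly_dense_def by blast
  then have "p \<in> weak_basic_open I \<phi> U" using box by simp
  moreover have "\<bar>f p - f y\<bar> < e" using p(2) by simp
  ultimately show ?thesis using p(1) by blast
qed

lemma weak_basic_open_absorbing:
  assumes data: "weak_open_data I \<phi> U" and y0: "y0 \<in> weak_basic_open I \<phi> U"
  shows "\<exists>t>0. y0 + t *\<^sub>R w \<in> weak_basic_open I \<phi> U"
proof -
  obtain \<delta> where \<delta>: "\<delta> > 0"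
    and box: "\<And>z. \<forall>i\<in>I. \<bar>\<phi> i z - \<phi> i y0\<bar> < \<delta> \<Longrightarrow> z \<in> weak_basic_open I \<phi> U"
    using weak_basic_open_radius[OF data y0] by blast
  define t where "t = \<delta> / ((\<Sum>i\<in>I. \<bar>\<phi> i w\<bar>) + 1)"
  have t: "t > 0" using \<delta> unfolding t_def by (simp add: add_nonneg_pos sum_nonneg)
  have "\<bar>\<phi> i (y0 + t *\<^sub>R w) - \<phi> i y0\<bar> < \<delta>" if i: "i \<in> I" for i
  proof -
    have lin: "bounded_linear (\<phi> i)" using data i unfolding weak_open_data_def by blast
    have "\<bar>\<phi> i w\<bar> \<le> (\<Sum>i\<in>I. \<bar>\<phi> i w\<bar>)"
      using data i unfolding weak_open_data_def by (intro member_le_sum) auto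
    then have "\<delta> * \<bar>\<phi> i w\<bar> < \<delta> * ((\<Sum>i\<in>I. \<bar>\<phi> i w\<bar>) + 1)"
      using \<delta> by (intro mult_strict_left_mono) auto
    moreover have "(\<Sum>i\<in>I. \<bar>\<phi> i w\<bar>) + 1 > 0" by (simp add: add_nonneg_pos sum_nonneg)
    ultimately have "t * \<bar>\<phi> i w\<bar> < \<delta>" unfolding t_def by (simp add: pos_divide_less_eq)
    then show ?thesis
      using lin t by (simp add: linear_add linear_scale bounded_linear.linear abs_mult)
  qed
  then show ?thesis using box t by blast
qed

text \<open>If a weakly dense set meets a nonempty weak basic open set only inside a subspace V,
  then V is dense: the open set lies in the (weakly closed) closure of V and absorbs every
  direction.\<close>

lemma weakly_dense_trace_in_subspace:
  fixes S :: "'a::real_normed_vector set"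
  assumes wd: "weakly_dense S" and data: "weak_open_data I \<phi> U" and V: "subspace V"
    and trace: "S \<inter> weak_basic_open I \<phi> U \<subseteq> V" and y0: "y0 \<in> weak_basic_open I \<phi> U"
  shows "closure V = UNIV"
proof -
  have W_closure: "y \<in> closure V" if y: "y \<in> weak_basic_open I \<phi> U" for y
  proof (rule in_closure_subspace[OF V])
    fix f :: "'a \<Rightarrow> real" assume f: "bounded_linear f" and vanish: "\<forall>v\<in>V. f v = 0"
    have "\<bar>f y\<bar> < e" if "e > 0" for e
    proof -
      obtain p where "p \<in> S \<inter> weak_basic_open I \<phi> U" "\<bar>f p - f y\<bar> < e"
        using weakly_dense_meets_basic_open[OF wd data y f \<open>e > 0\<close>] by blast
      moreover from this(1) have "f p = 0" using trace vanish by blast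
      ultimately show ?thesis by simp
    qed
    from this[of "\<bar>f y\<bar>"] show "f y = 0" by (cases "f y = 0") auto
  qed
  have "w \<in> closure V" for w
  proof -
    obtain t where t: "t > 0" "y0 + t *\<^sub>R w \<in> weak_basic_open I \<phi> U"
      using weak_basic_open_absorbing[OF data y0] by blast
    have "(y0 + t *\<^sub>R w) - y0 \<in> closure V"
      using W_closure[OF t(2)] W_closure[OF y0] by (rule subspace_diff[OF subspace_closure[OF V]])
    then have "(1 / t) *\<^sub>R ((y0 + t *\<^sub>R w) - y0) \<in> closure V"
      by (rule subspace_scale[OF subspace_closure[OF V]])
    then show ?thesis using t(1) by simp
  qed
  then show ?thesis by blast
qed

lemma weakly_dense_in_subspace:
  fixes S :: "'a::real_normed_vector set"
  assumes "weakly_dense S" "subspace V" "S \<subseteq> V"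
  shows "closure V = UNIV"
proof -
  have data: "weak_open_data ({} :: unit set) (\<lambda>_ _. 0) (\<lambda>_. UNIV)"
    unfolding weak_open_data_def by simp
  have "weak_basic_open ({} :: unit set) (\<lambda>_ (_::'a). 0::real) (\<lambda>_. UNIV) = UNIV"
    unfolding weak_basic_open_def by simp
  then show ?thesis
    using weakly_dense_trace_in_subspace[OF assms(1) data assms(2)] assms(3) by simp
qed

text \<open>Then the weak neighbourhood where h > 1/2 and g + r h is
  small (for a suitable real r) only sees a single degree n, so that V n is dense.\<close>

lemma weakly_dense_graded:
  fixes S :: "'a::real_normed_vector set" and V :: "nat \<Rightarrow> 'a set" and g h :: "'a \<Rightarrow> real"
  assumes wd: "weakly_dense S" and V: "\<And>n. subspace (V n)"
    and g: "bounded_linear g" and h: "bounded_linear h" and y0: "h y0 \<noteq> 0"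
    and graded: "\<And>p. p \<in> S \<Longrightarrow> \<exists>n. p \<in> V n \<and> g p = - real n * h p"
  shows "\<exists>n. closure (V n) = UNIV"
proof -
  define y1 where "y1 = (1 / h y0) *\<^sub>R y0"
  have hy1: "h y1 = 1" using y0 h unfolding y1_def by (simp add: linear_scale bounded_linear.linear)
  define r where "r = - g y1"
  define \<psi> where "\<psi> y = g y + r * h y" for y
  define \<phi> where "\<phi> b = (if b then h else \<psi>)" for b
  define U where "U b = (if b then {1/2<..} else {-1/4<..<1/4::real})" for b
  define W where "W = weak_basic_open UNIV \<phi> U"
  have inW: "y \<in> W \<longleftrightarrow> h y > 1/2 \<and> - 1/4 < \<psi> y \<and> \<psi> y < 1/4" for y
    unfolding W_def weak_basic_open_def \<phi>_def U_def by (simp add: all_bool_eq)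
  have "bounded_linear \<psi>"
    unfolding \<psi>_def using g h by (intro bounded_linear_add bounded_linear_const_mult)
  then have data: "weak_open_data UNIV \<phi> U"
    unfolding weak_open_data_def \<phi>_def U_def using h by (simp add: all_bool_eq)
  have y1W: "y1 \<in> W" using hy1 unfolding inW \<psi>_def r_def by simp
  (* on W the degree of a point is the integer nearest to r *)
  have degree: "\<bar>real n - r\<bar> < 1/2" if p: "p \<in> W" and gp: "g p = - real n * h p" for p n
  proof (rule ccontr)
    assume "\<not> ?thesis"
    then have "1/2 \<le> \<bar>r - real n\<bar>" by linarith
    then have "1/2 * (1/2) \<le> \<bar>r - real n\<bar> * h p" using p unfolding inW
      by (intro mult_mono) auto
    also have "\<dots> = \<bar>\<psi> p\<bar>"
    proof -
      have "\<psi> p = (r - real n) * h p" using gp unfolding \<psi>_def by (simp add: algebra_simps)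
      moreover have "h p > 0" using p unfolding inW by simp
      ultimately show ?thesis by (simp add: abs_mult)
    qed
    moreover have "- 1/4 < \<psi> p" "\<psi> p < 1/4" using p unfolding inW by simp_all
    ultimately show False by linarith
  qed
  obtain p0 where p0: "p0 \<in> S" "p0 \<in> W"
    using weakly_dense_meets_basic_open[OF wd data _ h zero_less_one] y1W unfolding W_def by blast
  obtain N where "g p0 = - real N * h p0" using graded[OF p0(1)] by blast
  then have N: "\<bar>real N - r\<bar> < 1/2" using degree p0(2) by blast
  have "S \<inter> W \<subseteq> V N"
  proof
    fix p assume p: "p \<in> S \<inter> W"
    then obtain n where n: "p \<in> V n" "g p = - real n * h p" using graded by blast
    have "\<bar>real n - r\<bar> < 1/2" using degree p n(2) by blast
    then have "n = N" using N by linarith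
    then show "p \<in> V N" using n(1) by simp
  qed
  then have "closure (V N) = UNIV"
    using weakly_dense_trace_in_subspace[OF wd data V] y1W unfolding W_def by blast
  then show ?thesis by blast
qed

section \<open>The orbit identity\<close>

lemma orbit_identity:
  fixes T M B C :: "'a::real_vector \<Rightarrow> 'a"
  assumes T: "linear T" and C: "linear C"
    and TB: "\<And>x. T (B x) = B (T x)" and TC: "\<And>x. T (C x) = C (T x)"
    and TD: "commutator T (commutator T M) = (\<lambda>_. 0)"
    and u: "C (M u) = B u"
  shows "T (C (M ((T ^^ n) u)) - B ((T ^^ n) u)) = - real n *\<^sub>R C (commutator T M ((T ^^ n) u))"
proof -
  define D where "D = commutator T M"
  define L where "L x = C (D x)" for x
  have D: "D x = T (M x) - M (T x)" for x unfolding D_def commutator_def by simp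
  have TD': "T (D x) = D (T x)" for x using fun_cong[OF TD, of x] unfolding D_def commutator_def by simp
  have TL: "T (L x) = L (T x)" for x unfolding L_def by (simp add: TC TD')
  define x where "x n = (T ^^ n) u" for n
  define a where "a n = C (M (x n)) - B (x n)" for n
  have a0: "a 0 = 0" by (simp add: a_def x_def u)
  (* commuting T past M costs the term L, which T does not change *)
  have aSuc: "a (Suc n) = T (a n) - L (x n)" for n
  proof -
    have "C (M (T (x n))) = C (T (M (x n)) - D (x n))" by (simp add: D)
    also have "\<dots> = T (C (M (x n))) - L (x n)" by (simp add: L_def TC linear_diff[OF C])
    finally show ?thesis by (simp add: a_def x_def TB linear_diff[OF T])
  qed
  have "T (a n) = - real n *\<^sub>R L (x n)" for n
  proof (induction n)
    case 0
    then show ?case by (simp add: a0 linear_0[OF T])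
  next
    case (Suc n)
    have "T (a (Suc n)) = T (T (a n)) - T (L (x n))" by (simp add: aSuc linear_diff[OF T])
    also have "\<dots> = - real n *\<^sub>R L (x (Suc n)) - L (x (Suc n))"
      by (simp add: Suc linear_scale[OF T] linear_neg[OF T] TL x_def)
    also have "\<dots> = - real (Suc n) *\<^sub>R L (x (Suc n))" by (simp add: algebra_simps)
    finally show ?case .
  qed
  then show ?thesis unfolding a_def L_def D_def x_def .
qed

section \<open>Operators on a normed space over K\<close>

context
  fixes sc :: "'k::real_normed_field \<Rightarrow> 'a::real_normed_vector \<Rightarrow> 'a"
  assumes sc: "scalar_action sc"
begin

lemma sc_mult: "sc (a * b) x = sc a (sc b x)"
  and sc_add_left: "sc (a + b) x = sc a x + sc b x"
  and sc_add_right: "sc a (x + y) = sc a x + sc a y"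
  and sc_norm: "norm (sc a x) = norm a * norm x"
  and sc_of_real: "sc (of_real r) x = r *\<^sub>R x"
  using sc unfolding scalar_action_def by blast+

lemma sc_bounded_bilinear: "bounded_bilinear sc"
proof
  fix a a' :: 'k and x x' :: 'a and r :: real
  show "sc (a + a') x = sc a x + sc a' x" by (rule sc_add_left)
  show "sc a (x + x') = sc a x + sc a x'" by (rule sc_add_right)
  show "sc (r *\<^sub>R a) x = r *\<^sub>R sc a x" by (simp add: scaleR_conv_of_real sc_mult sc_of_real)
  show "sc a (r *\<^sub>R x) = r *\<^sub>R sc a x" by (metis sc_mult sc_of_real mult.commute)
  show "\<exists>K. \<forall>a x. norm (sc a x) \<le> norm a * norm x * K" by (intro exI[of _ 1]) (simp add: sc_norm)
qed

interpretation sc: bounded_bilinear sc by (rule sc_bounded_bilinear)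

lemma sc_commute: "sc a (sc b x) = sc b (sc a x)"
  by (metis sc_mult mult.commute)

lemma opL_bounded_linear: "P \<in> opL sc \<Longrightarrow> bounded_linear P"
  and opL_sc: "P \<in> opL sc \<Longrightarrow> P (sc a x) = sc a (P x)"
  unfolding opL_def by blast+

lemma opL_compose:
  assumes "P \<in> opL sc" "Q \<in> opL sc"
  shows "(\<lambda>x. P (Q x)) \<in> opL sc"
  using assms bounded_linear_compose[of P Q] unfolding opL_def by simp

lemma opL_diff:
  assumes "P \<in> opL sc" "Q \<in> opL sc"
  shows "(\<lambda>x. P x - Q x) \<in> opL sc"
  using assms bounded_linear_sub[of P Q] unfolding opL_def by (simp add: sc.diff_right)

lemma commutator_opL:
  assumes "P \<in> opL sc" "Q \<in> opL sc"
  shows "commutator P Q \<in> opL sc"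
  unfolding commutator_def using opL_diff[OF opL_compose[OF assms] opL_compose[OF assms(2,1)]] .

lemma kspan_sum_extend:
  assumes "finite H" "F \<subseteq> H"
  shows "(\<Sum>z\<in>H. sc (if z \<in> F then c z else 0) z) = (\<Sum>z\<in>F. sc (c z) z)"
proof -
  have "(\<Sum>z\<in>H. sc (if z \<in> F then c z else 0) z) = (\<Sum>z\<in>H. if z \<in> F then sc (c z) z else 0)"
    by (rule sum.cong) (simp_all add: sc.zero_left)
  also have "\<dots> = (\<Sum>z\<in>H \<inter> F. sc (c z) z)" using assms(1) by (rule sum.inter_restrict[symmetric])
  also have "H \<inter> F = F" using assms(2) by blast
  finally show ?thesis .
qed

lemma kspanI: "finite F \<Longrightarrow> F \<subseteq> A \<Longrightarrow> (\<Sum>z\<in>F. sc (c z) z) \<in> kspan sc A"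
  unfolding kspan_def by blast

lemma subspace_kspan: "subspace (kspan sc A)"
  unfolding subspace_def
proof (intro conjI ballI allI)
  show "0 \<in> kspan sc A" using kspanI[of "{}"] by simp
next
  fix x y assume "x \<in> kspan sc A" "y \<in> kspan sc A"
  then obtain F c G d where F: "finite F" "F \<subseteq> A" "x = (\<Sum>z\<in>F. sc (c z) z)"
    and G: "finite G" "G \<subseteq> A" "y = (\<Sum>z\<in>G. sc (d z) z)"
    unfolding kspan_def by blast
  (* extend both coefficient families by zero to the common support F \<union> G *)
  define e where "e z = (if z \<in> F then c z else 0) + (if z \<in> G then d z else 0)" for z
  have "(\<Sum>z\<in>F \<union> G. sc (e z) z)
      = (\<Sum>z\<in>F \<union> G. sc (if z \<in> F then c z else 0) z) + (\<Sum>z\<in>F \<union> G. sc (if z \<in> G then d z else 0) z)"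
    unfolding e_def sc.add_left by (rule sum.distrib)
  also have "\<dots> = x + y"
    using kspan_sum_extend[of "F \<union> G" F c] kspan_sum_extend[of "F \<union> G" G d] F G by simp
  finally show "x + y \<in> kspan sc A"
    using kspanI[of "F \<union> G" A e] F G by simp
next
  fix r x assume "x \<in> kspan sc A"
  then obtain F c where F: "finite F" "F \<subseteq> A" "x = (\<Sum>z\<in>F. sc (c z) z)"
    unfolding kspan_def by blast
  have "r *\<^sub>R x = (\<Sum>z\<in>F. sc (r *\<^sub>R c z) z)"
    unfolding F(3) scaleR_sum_right by (simp add: sc.scaleR_left)
  then show "r *\<^sub>R x \<in> kspan sc A"
    using kspanI[of F A "\<lambda>z. r *\<^sub>R c z"] F by simp
qed

lemma subspace_kline: "subspace (range (\<lambda>z. sc z e))"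
  unfolding subspace_def
proof (intro conjI ballI allI)
  show "0 \<in> range (\<lambda>z. sc z e)" using sc.zero_left[of e] by (metis rangeI)
next
  fix x y assume "x \<in> range (\<lambda>z. sc z e)" "y \<in> range (\<lambda>z. sc z e)"
  then obtain a b where "x = sc a e" "y = sc b e" by blast
  then have "x + y = sc (a + b) e" by (simp add: sc.add_left)
  then show "x + y \<in> range (\<lambda>z. sc z e)" by simp
next
  fix r x assume "x \<in> range (\<lambda>z. sc z e)"
  then obtain a where "x = sc a e" by blast
  then have "r *\<^sub>R x = sc (r *\<^sub>R a) e" by (simp add: sc.scaleR_left)
  then show "r *\<^sub>R x \<in> range (\<lambda>z. sc z e)" by simp
qed

lemma sc_bounded_times_null:
  assumes "Bseq a" "v \<longlonglongrightarrow> 0"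
  shows "(\<lambda>k. sc (a k) (v k)) \<longlonglongrightarrow> 0"
  using sc.Bfun_prod_Zfun[of a sequentially v] assms by (simp add: tendsto_Zfun_iff)

text \<open>If the K-line through e \<noteq> 0 is dense, then any two bounded K-linear operators commute
  at e: both act on e as limits of scalars a k, b k, these scalars are bounded, and bounded
  sequences of scalars times null sequences are null.\<close>

lemma opL_commute_at_dense_line:
  assumes P: "P \<in> opL sc" and Q: "Q \<in> opL sc" and e: "e \<noteq> 0"
    and dense: "closure (range (\<lambda>z. sc z e)) = UNIV"
  shows "P (Q e) = Q (P e)"
proof -
  have approx: "\<exists>a. (\<lambda>k. sc (a k) e) \<longlonglongrightarrow> v" for v
  proof -
    obtain s where s: "\<forall>k. s k \<in> range (\<lambda>z. sc z e)" "s \<longlonglongrightarrow> v"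
      using dense closure_sequential[of v "range (\<lambda>z. sc z e)"] by blast
    from s(1) have "\<forall>k. \<exists>z. s k = sc z e" by blast
    then obtain a where "\<And>k. s k = sc (a k) e" by metis
    then have "s = (\<lambda>k. sc (a k) e)" by (simp add: fun_eq_iff)
    then show ?thesis using s(2) by blast
  qed
  have bounded: "Bseq a" if lim: "(\<lambda>k. sc (a k) e) \<longlonglongrightarrow> v" for a v
  proof -
    obtain B where "\<And>k. norm (sc (a k) e) \<le> B"
      using convergent_imp_Bseq[OF convergentI[OF lim]] unfolding Bseq_def by blast
    then have "norm (a k) \<le> B / norm e" for k using e by (simp add: sc_norm field_simps)
    then show ?thesis by (rule BseqI')
  qed
  obtain a where a: "(\<lambda>k. sc (a k) e) \<longlonglongrightarrow> P e" using approx by blast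
  obtain b where b: "(\<lambda>k. sc (b k) e) \<longlonglongrightarrow> Q e" using approx by blast
  have QP: "(\<lambda>k. sc (a k) (Q e)) \<longlonglongrightarrow> Q (P e)"
    using bounded_linear.tendsto[OF opL_bounded_linear[OF Q] a] by (simp add: opL_sc[OF Q])
  have PQ: "(\<lambda>k. sc (b k) (P e)) \<longlonglongrightarrow> P (Q e)"
    using bounded_linear.tendsto[OF opL_bounded_linear[OF P] b] by (simp add: opL_sc[OF P])
  have "(\<lambda>k. Q e - sc (b k) e) \<longlonglongrightarrow> 0" "(\<lambda>k. P e - sc (a k) e) \<longlonglongrightarrow> 0"
    using tendsto_diff[OF tendsto_const b, of "Q e"] tendsto_diff[OF tendsto_const a, of "P e"]
    by simp_all
  then have "(\<lambda>k. sc (a k) (Q e - sc (b k) e) - sc (b k) (P e - sc (a k) e)) \<longlonglongrightarrow> 0 - 0"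
    using sc_bounded_times_null bounded[OF a] bounded[OF b] by (intro tendsto_diff)
  moreover have "sc (a k) (Q e - sc (b k) e) - sc (b k) (P e - sc (a k) e)
      = sc (a k) (Q e) - sc (b k) (P e)" for k
    by (simp add: sc.diff_right sc_commute)
  ultimately have "(\<lambda>k. sc (a k) (Q e) - sc (b k) (P e)) \<longlonglongrightarrow> 0" by simp
  moreover have "(\<lambda>k. sc (a k) (Q e) - sc (b k) (P e)) \<longlonglongrightarrow> Q (P e) - P (Q e)"
    using QP PQ by (rule tendsto_diff)
  ultimately show ?thesis using LIMSEQ_unique by fastforce
qed

text \<open>Consequently, if some K-line is dense then X is one-dimensional over K and any two bounded
  K-linear operators commute: P Q - Q P is continuous and vanishes on the dense line.\<close>

lemma opL_commute_on_dense_line: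
  assumes P: "P \<in> opL sc" and Q: "Q \<in> opL sc" and dense: "closure (range (\<lambda>z. sc z e)) = UNIV"
  shows "P (Q w) = Q (P w)"
proof (cases "e = 0")
  case True
  then have "range (\<lambda>z. sc z e) = {0}" by (auto simp: sc.zero_right)
  then have "UNIV = {0 :: 'a}" using dense by simp
  then have "x = 0" for x :: 'a by (metis UNIV_I singletonD)
  then show ?thesis by (metis (full_types))
next
  case False
  have lin: "bounded_linear (\<lambda>x. P (Q x) - Q (P x))"
    using bounded_linear_compose[OF opL_bounded_linear[OF P] opL_bounded_linear[OF Q]]
      bounded_linear_compose[OF opL_bounded_linear[OF Q] opL_bounded_linear[OF P]]
    by (rule bounded_linear_sub)
  have "P (Q x) - Q (P x) = 0" if "x \<in> range (\<lambda>z. sc z e)" for x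
    using that opL_commute_at_dense_line[OF P Q False dense]
    by (auto simp: opL_sc[OF P] opL_sc[OF Q])
  then have "P (Q w) - Q (P w) = 0"
    using continuous_constant_on_closure[OF linear_continuous_on[OF lin]] dense by blast
  then show ?thesis by simp
qed

lemma commutantD: "S \<in> commutant sc T \<Longrightarrow> S \<in> opL sc"
  and commutant_commute: "S \<in> commutant sc T \<Longrightarrow> T (S x) = S (T x)"
  unfolding commutant_def commutator_def by (auto simp: fun_eq_iff)

lemma weakly_dense_orbit_cyclic:
  assumes "weakly_dense {sc z ((T ^^ n) u) | z n. True}"
  shows "cyclic_vector sc T u"
  unfolding cyclic_vector_def
proof (rule weakly_dense_in_subspace[OF assms subspace_kspan])
  show "{sc z ((T ^^ n) u) | z n. True} \<subseteq> kspan sc (range (\<lambda>n. (T ^^ n) u))"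
    using kspanI[of "{(T ^^ n) u}" "range (\<lambda>n. (T ^^ n) u)" "\<lambda>_. z" for z n] by auto
qed

lemma orbit_identity_on_lines:
  assumes T: "T \<in> opL sc" and M: "M \<in> opL sc" and TD: "commutator T (commutator T M) = (\<lambda>_. 0)"
    and B: "B \<in> commutant sc T" and C: "C \<in> commutant sc T" and u: "C (M u) = B u"
  shows "T (C (M (sc z ((T ^^ n) u))) - B (sc z ((T ^^ n) u)))
      = - real n *\<^sub>R C (commutator T M (sc z ((T ^^ n) u)))"
proof -
  have "T (C (M ((T ^^ n) u)) - B ((T ^^ n) u)) = - real n *\<^sub>R C (commutator T M ((T ^^ n) u))"
    using orbit_identity[OF bounded_linear.linear[OF opL_bounded_linear[OF T]]
        bounded_linear.linear[OF opL_bounded_linear[OF commutantD[OF C]]]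
        commutant_commute[OF B] commutant_commute[OF C] TD u] .
  then show ?thesis
    unfolding commutator_def
    by (simp add: opL_sc[OF T] opL_sc[OF M] opL_sc[OF commutantD[OF B]] opL_sc[OF commutantD[OF C]]
        sc.diff_right[symmetric] sc.scaleR_right sc.minus_right)
qed

lemma no_weakly_dense_orbit:
  assumes T: "T \<in> opL sc" and M: "M \<in> opL sc" and TD: "commutator T (commutator T M) = (\<lambda>_. 0)"
    and B: "B \<in> commutant sc T" and C: "C \<in> commutant sc T"
    and CD: "(\<lambda>x. C (commutator T M x)) \<noteq> (\<lambda>_. 0)" and u: "C (M u) = B u"
  shows "\<not> weakly_dense {sc z ((T ^^ n) u) | z n. True}"
proof
  assume wd: "weakly_dense {sc z ((T ^^ n) u) | z n. True}"
  define L where "L x = C (commutator T M x)" for x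
  define A where "A x = T (C (M x) - B x)" for x
  have L_opL: "L \<in> opL sc"
    unfolding L_def using opL_compose[OF commutantD[OF C] commutator_opL[OF T M]] .
  have A_opL: "A \<in> opL sc"
    unfolding A_def
    using opL_compose[OF T opL_diff[OF opL_compose[OF commutantD[OF C] M] commutantD[OF B]]] .
  have orbit: "A (sc z ((T ^^ n) u)) = - real n *\<^sub>R L (sc z ((T ^^ n) u))" for z n
    unfolding A_def L_def by (rule orbit_identity_on_lines[OF T M TD B C u])
  obtain y0 where "L y0 \<noteq> 0" using CD unfolding L_def by (auto simp: fun_eq_iff)
  then obtain \<phi> :: "'a \<Rightarrow> real" where \<phi>: "bounded_linear \<phi>" "\<phi> (L y0) = 1"
    using functional_nonzero by blast
  have "\<exists>N. closure (range (\<lambda>z. sc z ((T ^^ N) u))) = UNIV"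
  proof (rule weakly_dense_graded[OF wd subspace_kline])
    show "bounded_linear (\<lambda>x. \<phi> (A x))" "bounded_linear (\<lambda>x. \<phi> (L x))"
      using bounded_linear_compose[OF \<phi>(1) opL_bounded_linear[OF A_opL]]
        bounded_linear_compose[OF \<phi>(1) opL_bounded_linear[OF L_opL]] by auto
    show "\<phi> (L y0) \<noteq> 0" using \<phi>(2) by simp
    fix p assume "p \<in> {sc z ((T ^^ n) u) | z n. True}"
    then obtain z n where p: "p = sc z ((T ^^ n) u)" by blast
    have "\<phi> (A p) = - real n * \<phi> (L p)"
      using orbit[of z n] \<phi>(1) unfolding p by (simp add: linear_scale linear_neg bounded_linear.linear)
    then show "\<exists>n. p \<in> range (\<lambda>z. sc z ((T ^^ n) u)) \<and> \<phi> (A p) = - real n * \<phi> (L p)"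
      using p by blast
  qed
  then obtain N where "closure (range (\<lambda>z. sc z ((T ^^ N) u))) = UNIV" by blast
  then have "T (M x) = M (T x)" for x using opL_commute_on_dense_line[OF T M] by blast
  then have "L y0 = 0"
    unfolding L_def commutator_def
    using linear_0[OF bounded_linear.linear[OF opL_bounded_linear[OF commutantD[OF C]]]] by simp
  then show False using \<open>L y0 \<noteq> 0\<close> by simp
qed

end

theorem theorem1p4:
  fixes sc :: "'k::real_normed_field \<Rightarrow> 'a::banach \<Rightarrow> 'a" and T :: "'a \<Rightarrow> 'a"
  assumes K: "real_or_complex TYPE('k)"
    and sc: "scalar_action sc"
    and T: "T \<in> opL sc"
    and cond1: "\<exists>M \<in> opL sc. commutator T (commutator T M) = (\<lambda>_. 0) \<and>
       (\<forall>u v. cyclic_vector sc T u \<longrightarrow>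
          (\<exists>B \<in> commutant sc T. \<exists>C \<in> commutant sc T.
              (\<lambda>x. C (commutator T M x)) \<noteq> (\<lambda>_. 0) \<and> C v = B u))"
  shows "\<not> supercyclic sc T \<and>
    ((\<exists>R \<in> commutant sc T. closure (range R) = UNIV \<and>
        (\<exists>Y nY. embedded_banach sc Y nY \<and> in_class_Y Y nY \<and> range R \<subseteq> Y))
      \<longrightarrow> \<not> weakly_supercyclic sc T)"
proof -
  obtain M where M: "M \<in> opL sc" and TD: "commutator T (commutator T M) = (\<lambda>_. 0)"
    and cond: "\<And>u v. cyclic_vector sc T u \<Longrightarrow> \<exists>B \<in> commutant sc T. \<exists>C \<in> commutant sc T.
              (\<lambda>x. C (commutator T M x)) \<noteq> (\<lambda>_. 0) \<and> C v = B u"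
    using cond1 by blast
  (* no orbit is weakly dense: a weakly dense orbit would be cyclic, and condition (1) with v = M u
     then contradicts no_weakly_dense_orbit *)
  have no_wd: "\<not> weakly_dense {sc z ((T ^^ n) u) | z n. True}" for u
  proof
    assume wd: "weakly_dense {sc z ((T ^^ n) u) | z n. True}"
    obtain B C where "B \<in> commutant sc T" "C \<in> commutant sc T"
      "(\<lambda>x. C (commutator T M x)) \<noteq> (\<lambda>_. 0)" "C (M u) = B u"
      using cond[OF weakly_dense_orbit_cyclic[OF sc wd], of "M u"] by blast
    then show False using no_weakly_dense_orbit[OF sc T M TD] wd by blast
  qed
  then have "\<not> supercyclic sc T"
    unfolding supercyclic_def using dense_imp_weakly_dense by blast
  moreover have "\<not> weakly_supercyclic sc T"
    unfolding weakly_supercyclic_def using no_wd by blast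
  ultimately show ?thesis by blast
qed

end
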